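(* Let $G$ be a connected graph with $\delta(G)=1$ and girth at least $15$. If $G\in\mathcal U$, then every vertex $v$ with $d_G(v,S_G)=2$ has exactly one single star support vertex at distance exactly $2$ from $v$.
   Context: All graphs are finite and simple. A set $P\subseteq V(G)$ is an open packing if no two distinct vertices of $P$ have a common neighbor; it is maximal if maximal under inclusion among open packings. $\rho^o(G)$ is the maximum size of an open packing and $\rho^o_L(G)$ the minimum size of a maximal open packing; $\mathcal U$ is the class of graphs with $\rho^o_L(G)=\rho^o(G)$. A leaf is a vertex of degree $1$; a support vertex is a vertex adjacent to at least one leaf; $S_G$ is the set of support vertices and $d_G(v,S_G)=\min_{s\in S_G}d_G(v,s)$. A single star support vertex is a support vertex not adjacent to any other support vertex. *)

theory Defs
  imports Main
begin

definition graph :: "'a set \<Rightarrow> ('a \<Rightarrow> 'a \<Rightarrow> bool) \<Rightarrow> bool" where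
  "graph V E \<longleftrightarrow> finite V \<and> (\<forall>u v. E u v \<longrightarrow> u \<in> V \<and> v \<in> V)
     \<and> (\<forall>u v. E u v \<longrightarrow> E v u) \<and> (\<forall>v. \<not> E v v)"

definition nbhd :: "'a set \<Rightarrow> ('a \<Rightarrow> 'a \<Rightarrow> bool) \<Rightarrow> 'a \<Rightarrow> 'a set" where
  "nbhd V E v = {u \<in> V. E v u}"

definition degree :: "'a set \<Rightarrow> ('a \<Rightarrow> 'a \<Rightarrow> bool) \<Rightarrow> 'a \<Rightarrow> nat" where
  "degree V E v = card (nbhd V E v)"

definition min_degree :: "'a set \<Rightarrow> ('a \<Rightarrow> 'a \<Rightarrow> bool) \<Rightarrow> nat" where
  "min_degree V E = Min (degree V E ` V)"

definition walk :: "'a set \<Rightarrow> ('a \<Rightarrow> 'a \<Rightarrow> bool) \<Rightarrow> 'a list \<Rightarrow> bool" where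
  "walk V E xs \<longleftrightarrow> xs \<noteq> [] \<and> set xs \<subseteq> V \<and> (\<forall>i. Suc i < length xs \<longrightarrow> E (xs ! i) (xs ! Suc i))"

definition connected :: "'a set \<Rightarrow> ('a \<Rightarrow> 'a \<Rightarrow> bool) \<Rightarrow> bool" where
  "connected V E \<longleftrightarrow> (\<forall>u\<in>V. \<forall>v\<in>V. \<exists>xs. walk V E xs \<and> hd xs = u \<and> last xs = v)"

definition dist :: "'a set \<Rightarrow> ('a \<Rightarrow> 'a \<Rightarrow> bool) \<Rightarrow> 'a \<Rightarrow> 'a \<Rightarrow> nat" where
  "dist V E u v = (LEAST n. \<exists>xs. walk V E xs \<and> hd xs = u \<and> last xs = v \<and> length xs = Suc n)"

definition is_cycle :: "'a set \<Rightarrow> ('a \<Rightarrow> 'a \<Rightarrow> bool) \<Rightarrow> 'a list \<Rightarrow> bool" where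
  "is_cycle V E xs \<longleftrightarrow> length xs \<ge> 3 \<and> distinct xs \<and> walk V E xs \<and> E (last xs) (hd xs)"

text \<open>Girth at least g (acyclic graphs have infinite girth).\<close>
definition girth_at_least :: "'a set \<Rightarrow> ('a \<Rightarrow> 'a \<Rightarrow> bool) \<Rightarrow> nat \<Rightarrow> bool" where
  "girth_at_least V E g \<longleftrightarrow> (\<forall>xs. is_cycle V E xs \<longrightarrow> length xs \<ge> g)"

definition leaf :: "'a set \<Rightarrow> ('a \<Rightarrow> 'a \<Rightarrow> bool) \<Rightarrow> 'a \<Rightarrow> bool" where
  "leaf V E v \<longleftrightarrow> v \<in> V \<and> degree V E v = 1"

definition support :: "'a set \<Rightarrow> ('a \<Rightarrow> 'a \<Rightarrow> bool) \<Rightarrow> 'a \<Rightarrow> bool" where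
  "support V E v \<longleftrightarrow> v \<in> V \<and> (\<exists>u. E v u \<and> leaf V E u)"

definition support_set :: "'a set \<Rightarrow> ('a \<Rightarrow> 'a \<Rightarrow> bool) \<Rightarrow> 'a set" where
  "support_set V E = {v \<in> V. support V E v}"

definition single_star_support :: "'a set \<Rightarrow> ('a \<Rightarrow> 'a \<Rightarrow> bool) \<Rightarrow> 'a \<Rightarrow> bool" where
  "single_star_support V E v \<longleftrightarrow> support V E v \<and> (\<forall>u. E v u \<longrightarrow> \<not> support V E u)"

definition dist_set :: "'a set \<Rightarrow> ('a \<Rightarrow> 'a \<Rightarrow> bool) \<Rightarrow> 'a \<Rightarrow> 'a set \<Rightarrow> nat" where
  "dist_set V E v S = Min (dist V E v ` S)"

definition open_packing :: "'a set \<Rightarrow> ('a \<Rightarrow> 'a \<Rightarrow> bool) \<Rightarrow> 'a set \<Rightarrow> bool" where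
  "open_packing V E P \<longleftrightarrow> P \<subseteq> V \<and>
     (\<forall>u\<in>P. \<forall>w\<in>P. u \<noteq> w \<longrightarrow> \<not> (\<exists>x. E u x \<and> E w x))"

definition maximal_open_packing :: "'a set \<Rightarrow> ('a \<Rightarrow> 'a \<Rightarrow> bool) \<Rightarrow> 'a set \<Rightarrow> bool" where
  "maximal_open_packing V E P \<longleftrightarrow> open_packing V E P \<and>
     (\<forall>Q. open_packing V E Q \<and> P \<subseteq> Q \<longrightarrow> Q = P)"

definition open_packing_number :: "'a set \<Rightarrow> ('a \<Rightarrow> 'a \<Rightarrow> bool) \<Rightarrow> nat" where
  "open_packing_number V E = Max (card ` {P. open_packing V E P})"

definition lower_open_packing_number :: "'a set \<Rightarrow> ('a \<Rightarrow> 'a \<Rightarrow> bool) \<Rightarrow> nat" where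
  "lower_open_packing_number V E = Min (card ` {P. maximal_open_packing V E P})"

definition in_U :: "'a set \<Rightarrow> ('a \<Rightarrow> 'a \<Rightarrow> bool) \<Rightarrow> bool" where
  "in_U V E \<longleftrightarrow> lower_open_packing_number V E = open_packing_number V E"

end

theory Submission
  imports Defs
begin

text \<open>Measure levels by the distance from \<open>v\<close>. Girth at least 15 makes the first seven levels
  tree-like: no edge joins two vertices of one level, and every vertex has a unique neighbour on the
  level above, since otherwise two shortest paths from \<open>v\<close> would close a cycle of length at most 14.
  In a graph of \<open>\<U>\<close> every maximal open packing is maximum, so no member of a maximal open packing
  can be exchanged for two new vertices. If no support at distance 2 were a single star support,
  some support \<open>s\<close> at distance 2 would have a support neighbour with a leaf \<open>m\<close> on level 4; a
  maximal open packing containing \<open>s\<close> and a level-4 grandchild of every level-2 vertex conflicting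
  with \<open>v\<close> would then allow exchanging \<open>s\<close> for \<open>v\<close> and \<open>m\<close>. If \<open>s\<^sub>1 \<noteq> s\<^sub>2\<close> were single
  star supports at distance 2, a maximal open packing containing \<open>v\<close> and a level-6 grandchild of
  every level-4 vertex conflicting with \<open>s\<^sub>1\<close> or \<open>s\<^sub>2\<close> would allow exchanging \<open>v\<close> for \<open>s\<^sub>1\<close> and
  \<open>s\<^sub>2\<close>.\<close>

section \<open>Walks, leaves and supports\<close>

locale simple_graph =
  fixes V :: "'a set" and E :: "'a \<Rightarrow> 'a \<Rightarrow> bool"
  assumes graph: "graph V E"
begin

lemma finite_V: "finite V"
  using graph unfolding graph_def by auto

lemma edge_in_V: "E u w \<Longrightarrow> u \<in> V \<and> w \<in> V"
  using graph unfolding graph_def by auto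

lemma edge_sym: "E u w \<Longrightarrow> E w u"
  using graph unfolding graph_def by auto

lemma edge_irrefl: "\<not> E u u"
  using graph unfolding graph_def by auto

lemma walk_singleton [simp]: "walk V E [x] \<longleftrightarrow> x \<in> V"
  unfolding walk_def by auto

lemma walk_Cons_Cons [simp]: "walk V E (x # y # xs) \<longleftrightarrow> E x y \<and> walk V E (y # xs)"
  unfolding walk_def using edge_in_V by (auto simp: nth_Cons split: nat.splits)

lemma walk_append:
  assumes "walk V E xs" "walk V E ys" "E (last xs) (hd ys)"
  shows "walk V E (xs @ ys)"
  using assms
proof (induction xs rule: induct_list012)
  case (2 x)
  then show ?case by (cases ys) auto
next
  case (3 x y zs)
  then show ?case by auto
qed (simp add: walk_def)

lemma walk_rev: "walk V E xs \<Longrightarrow> walk V E (rev xs)"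
proof (induction xs rule: induct_list012)
  case (3 x y zs)
  then have "walk V E (rev (y # zs) @ [x])"
    using edge_in_V edge_sym by (intro walk_append) (auto simp: last_rev)
  then show ?case by simp
qed auto

lemma walk_map_upt:
  assumes "\<And>i. m \<le> i \<Longrightarrow> i < n \<Longrightarrow> E (f i) (f (Suc i))" "f m \<in> V" "m \<le> n"
  shows "walk V E (map f [m..<Suc n])"
  using assms
proof (induction n)
  case (Suc n)
  show ?case
  proof (cases "m \<le> n")
    case True
    then have "walk V E (map f [m..<Suc n] @ [f (Suc n)])"
      using Suc edge_in_V by (intro walk_append) auto
    then show ?thesis using True by simp
  next
    case False
    then show ?thesis using Suc by (simp add: le_Suc_eq)
  qed
qed simp

lemma leaf_nbr_unique: "leaf V E l \<Longrightarrow> E l a \<Longrightarrow> E l b \<Longrightarrow> a = b"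
  unfolding leaf_def degree_def nbhd_def using edge_in_V
  by (metis (mono_tags, lifting) card_1_singletonE mem_Collect_eq singletonD)

lemma not_leaf_other_nbr:
  assumes "E x y" "\<not> leaf V E x"
  shows "\<exists>z. E x z \<and> z \<noteq> y"
proof (rule ccontr)
  assume "\<nexists>z. E x z \<and> z \<noteq> y"
  then have "nbhd V E x = {y}"
    using assms(1) edge_in_V unfolding nbhd_def by blast
  then show False
    using assms edge_in_V unfolding leaf_def degree_def by auto
qed

lemma support_if_other_nbrs_leaves:
  assumes "E x p" "\<not> leaf V E x" "\<And>z. E x z \<Longrightarrow> z \<noteq> p \<Longrightarrow> leaf V E z"
  shows "support V E x"
  using not_leaf_other_nbr[OF assms(1,2)] assms edge_in_V unfolding support_def by blast

lemma leaf_not_support: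
  assumes "leaf V E l" "E x l" "\<not> leaf V E x"
  shows "\<not> support V E l"
  using assms leaf_nbr_unique edge_sym unfolding support_def by blast

lemma support_exists:
  assumes "V \<noteq> {}" "min_degree V E = 1"
  obtains s where "support V E s"
proof -
  have "min_degree V E \<in> degree V E ` V"
    unfolding min_degree_def using finite_V assms(1) by (intro Min_in) auto
  then obtain l where "leaf V E l"
    using assms(2) unfolding leaf_def by auto
  then obtain s where "nbhd V E l = {s}"
    unfolding leaf_def degree_def by (metis card_1_singletonE)
  then have "E l s"
    unfolding nbhd_def by blast
  then show thesis
    using that \<open>leaf V E l\<close> edge_in_V edge_sym unfolding support_def by blast
qed


end

section \<open>Open packings\<close>

definition common_nbr :: "('a \<Rightarrow> 'a \<Rightarrow> bool) \<Rightarrow> 'a \<Rightarrow> 'a \<Rightarrow> bool" where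
  "common_nbr E x y \<longleftrightarrow> (\<exists>z. E x z \<and> E y z)"

lemma common_nbr_sym: "common_nbr E x y \<Longrightarrow> common_nbr E y x"
  unfolding common_nbr_def by blast

lemma open_packing_no_common_nbr:
  "open_packing V E P \<Longrightarrow> p \<in> P \<Longrightarrow> q \<in> P \<Longrightarrow> p \<noteq> q \<Longrightarrow> \<not> common_nbr E p q"
  unfolding open_packing_def common_nbr_def by blast

lemma open_packing_insert_image:
  assumes "a \<in> V" and far: "\<And>y. y \<in> Y \<Longrightarrow> f y \<in> V \<and> f y \<noteq> a \<and> \<not> common_nbr E (f y) a"
    and apart: "\<And>y y'. y \<in> Y \<Longrightarrow> y' \<in> Y \<Longrightarrow> f y \<noteq> f y' \<Longrightarrow> \<not> common_nbr E (f y) (f y')"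
  shows "open_packing V E (insert a (f ` Y))"
  unfolding open_packing_def
proof (intro conjI ballI impI)
  show "insert a (f ` Y) \<subseteq> V"
    using assms(1) far by blast
  fix u w
  assume "u \<in> insert a (f ` Y)" "w \<in> insert a (f ` Y)" "u \<noteq> w"
  then have "\<not> common_nbr E u w"
    using far apart by (auto dest: common_nbr_sym)
  then show "\<nexists>x. E u x \<and> E w x"
    unfolding common_nbr_def .
qed

context simple_graph
begin

lemma finite_open_packings: "finite {P. open_packing V E P}"
  using finite_V unfolding open_packing_def
  by (auto intro: finite_subset[of _ "Pow V"])

lemma open_packing_finite: "open_packing V E P \<Longrightarrow> finite P"
  using finite_V finite_subset unfolding open_packing_def by blast

lemma open_packing_extends_to_maximal:
  assumes "open_packing V E J"
  obtains P where "maximal_open_packing V E P" "J \<subseteq> P"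
proof -
  let ?S = "{Q. open_packing V E Q \<and> J \<subseteq> Q}"
  have "finite ?S"
    using finite_open_packings by (rule rev_finite_subset) auto
  moreover have "?S \<noteq> {}"
    using assms by blast
  ultimately obtain P where P: "P \<in> ?S" "\<forall>Q\<in>?S. P \<subseteq> Q \<longrightarrow> P = Q"
    by (metis finite_has_maximal)
  then have "maximal_open_packing V E P"
    unfolding maximal_open_packing_def by force
  with P show thesis
    using that by simp
qed

lemma in_U_card_le_maximal:
  assumes "in_U V E" "maximal_open_packing V E P" "open_packing V E Q"
  shows "card Q \<le> card P"
proof -
  have "finite {P. maximal_open_packing V E P}"
    using finite_open_packings
    by (rule rev_finite_subset) (auto simp: maximal_open_packing_def)
  then have "lower_open_packing_number V E \<le> card P"
    using assms(2) unfolding lower_open_packing_number_def by (simp add: Min_le)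
  moreover have "card Q \<le> open_packing_number V E"
    using finite_open_packings assms(3) unfolding open_packing_number_def by (simp add: Max_ge)
  ultimately show ?thesis
    using assms(1) unfolding in_U_def by simp
qed

text \<open>Otherwise \<open>(P - {a}) \<union> {b, c}\<close> would be an open packing larger than the maximal
  packing \<open>P\<close>.\<close>

lemma in_U_no_exchange:
  assumes U: "in_U V E" and P: "maximal_open_packing V E P" and "a \<in> P"
    and "b \<in> V" "c \<in> V" "b \<notin> P" "c \<notin> P" "b \<noteq> c" "\<not> common_nbr E b c"
    and "\<forall>p\<in>P - {a}. \<not> common_nbr E b p" "\<forall>p\<in>P - {a}. \<not> common_nbr E c p"
  shows False
proof -
  have opP: "open_packing V E P"
    using P unfolding maximal_open_packing_def by blast
  let ?Q = "insert b (insert c (P - {a}))"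
  have "open_packing V E ?Q"
    unfolding open_packing_def
  proof (intro conjI ballI impI)
    show "?Q \<subseteq> V"
      using opP assms unfolding open_packing_def by blast
    fix u w
    assume "u \<in> ?Q" "w \<in> ?Q" "u \<noteq> w"
    then have "(u = b \<or> u = c \<or> u \<in> P - {a}) \<and> (w = b \<or> w = c \<or> w \<in> P - {a})"
      by blast
    then have "\<not> common_nbr E u w"
      using assms open_packing_no_common_nbr[OF opP, of u w] common_nbr_sym \<open>u \<noteq> w\<close>
      by (metis DiffD1)
    then show "\<nexists>x. E u x \<and> E w x"
      unfolding common_nbr_def .
  qed
  moreover have "card ?Q = Suc (card P)"
  proof -
    have "Suc (card (P - {a})) = card P"
      using card_Suc_Diff1 open_packing_finite[OF opP] \<open>a \<in> P\<close> .
    then show ?thesis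
      using assms open_packing_finite[OF opP] by (simp del: card_Diff_insert)
  qed
  ultimately show False
    using in_U_card_le_maximal[OF U P] by fastforce
qed

lemma in_U_supports_no_common_nbr:
  assumes U: "in_U V E" and "support V E a" "support V E b" "a \<noteq> b"
  shows "\<not> common_nbr E a b"
proof
  assume "common_nbr E a b"
  then obtain c where ca: "E c a" and cb: "E c b"
    unfolding common_nbr_def using edge_sym by blast
  obtain la where la: "E a la" "leaf V E la"
    using assms(2) unfolding support_def by blast
  obtain lb where lb: "E b lb" "leaf V E lb"
    using assms(3) unfolding support_def by blast
  have la_nbr: "E la z \<Longrightarrow> z = a" for z
    using leaf_nbr_unique[OF la(2)] la(1) edge_sym by blast
  have lb_nbr: "E lb z \<Longrightarrow> z = b" for z
    using leaf_nbr_unique[OF lb(2)] lb(1) edge_sym by blast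
  have "open_packing V E {c}"
    using ca edge_in_V unfolding open_packing_def by blast
  then obtain P where P: "maximal_open_packing V E P" "c \<in> P"
    using open_packing_extends_to_maximal by blast
  have opP: "open_packing V E P"
    using P(1) unfolding maximal_open_packing_def by blast
  have la_c: "la \<noteq> c" and lb_c: "lb \<noteq> c"
    using la_nbr lb_nbr ca cb \<open>a \<noteq> b\<close> by blast+
  have "common_nbr E la c" "common_nbr E lb c"
    unfolding common_nbr_def using la lb ca cb edge_sym by blast+
  then have "la \<notin> P" "lb \<notin> P"
    using open_packing_no_common_nbr[OF opP _ P(2)] la_c lb_c by blast+
  moreover have "\<not> common_nbr E la p" "\<not> common_nbr E lb p" if "p \<in> P - {c}" for p
    using that open_packing_no_common_nbr[OF opP _ P(2)] la_nbr lb_nbr ca cb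
    unfolding common_nbr_def by blast+
  moreover have "la \<noteq> lb" "\<not> common_nbr E la lb"
    using la_nbr lb_nbr la(1) \<open>a \<noteq> b\<close> unfolding common_nbr_def by (blast dest: edge_sym)+
  ultimately show False
    using in_U_no_exchange[OF U P] la lb edge_in_V by blast
qed

text \<open>Extend \<open>a\<close> together with a witness \<open>u\<close> for every potential blocker \<open>y\<close> of \<open>b\<close> or \<open>c\<close>
  to a maximal open packing: the witnesses keep all blockers out of it, so \<open>a\<close> can be
  exchanged for \<open>b\<close> and \<open>c\<close>.\<close>

lemma in_U_no_witnessed_exchange:
  fixes R :: "'a \<Rightarrow> 'a \<Rightarrow> bool"
  assumes U: "in_U V E" and "a \<in> V" "b \<in> V" "c \<in> V" "b \<noteq> c" "\<not> common_nbr E b c"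
    and "b \<noteq> a" "c \<noteq> a" "common_nbr E a b" "common_nbr E a c"
    and witness: "\<And>y. y \<in> V \<Longrightarrow> y \<noteq> a \<Longrightarrow> \<not> common_nbr E y a \<Longrightarrow>
        common_nbr E b y \<or> common_nbr E c y \<Longrightarrow> \<exists>u. R y u"
    and witness_far: "\<And>y u. R y u \<Longrightarrow>
        u \<in> V \<and> u \<noteq> a \<and> \<not> common_nbr E u a \<and> u \<noteq> y \<and> common_nbr E y u"
    and witnesses_apart: "\<And>y y' u u'. R y u \<Longrightarrow> R y' u' \<Longrightarrow> common_nbr E u u' \<Longrightarrow> u = u' \<or> y = y'"
  shows False
proof -
  define Y where
    "Y = {y \<in> V. y \<noteq> a \<and> \<not> common_nbr E y a \<and> (common_nbr E b y \<or> common_nbr E c y)}"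
  have "\<forall>y\<in>Y. \<exists>u. R y u"
    using witness unfolding Y_def by blast
  then obtain f where f: "\<forall>y\<in>Y. R y (f y)"
    using bchoice by blast
  have "open_packing V E (insert a (f ` Y))"
  proof (rule open_packing_insert_image)
    show "f y \<in> V \<and> f y \<noteq> a \<and> \<not> common_nbr E (f y) a" if "y \<in> Y" for y
      using f witness_far that by blast
    show "\<not> common_nbr E (f y) (f y')" if "y \<in> Y" "y' \<in> Y" "f y \<noteq> f y'" for y y'
      using f witnesses_apart that by metis
  qed fact
  then obtain P where P: "maximal_open_packing V E P" "insert a (f ` Y) \<subseteq> P"
    using open_packing_extends_to_maximal by blast
  have opP: "open_packing V E P"
    using P(1) unfolding maximal_open_packing_def by blast
  have aP: "a \<in> P"
    using P(2) by blast
  have "b \<notin> P" "c \<notin> P"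
    using open_packing_no_common_nbr[OF opP aP] assms(7-10) by blast+
  moreover have "\<not> common_nbr E x p" if "x = b \<or> x = c" "p \<in> P - {a}" for x p
  proof
    assume "common_nbr E x p"
    moreover have "\<not> common_nbr E p a"
      using open_packing_no_common_nbr[OF opP _ aP] that(2) by blast
    moreover have "p \<in> V"
      using opP that(2) unfolding open_packing_def by blast
    ultimately have "p \<in> Y"
      using that unfolding Y_def by blast
    then have "f p \<in> P" "R p (f p)"
      using P(2) f by blast+
    then show False
      using witness_far[OF \<open>R p (f p)\<close>] open_packing_no_common_nbr[OF opP, of p "f p"] that(2)
      by auto
  qed
  ultimately show False
    using in_U_no_exchange[OF U P(1) aP] assms(3-6) by blast
qed

end

section \<open>Distances\<close>

locale connected_graph = simple_graph +
  assumes connected: "connected V E"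
begin

lemma dist_le_walk:
  assumes "walk V E xs" "hd xs = u" "last xs = w"
  shows "dist V E u w \<le> length xs - 1"
  unfolding dist_def
proof (rule Least_le)
  show "\<exists>ys. walk V E ys \<and> hd ys = u \<and> last ys = w \<and> length ys = Suc (length xs - 1)"
    using assms by (intro exI[of _ xs]) (auto simp: walk_def)
qed

lemma shortest_walk_exists:
  assumes "u \<in> V" "w \<in> V"
  shows "\<exists>xs. walk V E xs \<and> hd xs = u \<and> last xs = w \<and> length xs = Suc (dist V E u w)"
proof -
  obtain xs where "walk V E xs" "hd xs = u" "last xs = w"
    using connected assms unfolding connected_def by blast
  then have "\<exists>n xs. walk V E xs \<and> hd xs = u \<and> last xs = w \<and> length xs = Suc n"
    by (metis Suc_pred length_greater_0_conv walk_def)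
  then show ?thesis
    unfolding dist_def by (rule LeastI_ex)
qed

lemma dist_le_path:
  assumes "\<And>i. m \<le> i \<Longrightarrow> i < n \<Longrightarrow> E (f i) (f (Suc i))" "f m \<in> V" "m \<le> n"
  shows "dist V E (f m) (f n) \<le> n - m"
proof -
  have "hd (map f [m..<Suc n]) = f m" "last (map f [m..<Suc n]) = f n"
    using assms(3) by (simp_all add: hd_map last_map hd_upt del: upt_Suc)
  then show ?thesis
    using dist_le_walk[OF walk_map_upt[OF assms]] assms(3) by (simp del: upt_Suc)
qed

lemma dist_self: "u \<in> V \<Longrightarrow> dist V E u u = 0"
  using dist_le_walk[of "[u]"] by simp

lemma dist_eq_0_iff:
  assumes "u \<in> V" "w \<in> V"
  shows "dist V E u w = 0 \<longleftrightarrow> u = w"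
proof
  assume "dist V E u w = 0"
  then obtain xs where "hd xs = u" "last xs = w" "length xs = 1"
    using shortest_walk_exists[OF assms] by auto
  then show "u = w"
    by (cases xs) auto
qed (use dist_self assms in simp)

lemma dist_edge_le: "E u w \<Longrightarrow> dist V E u w \<le> 1"
  using dist_le_walk[of "[u, w]"] edge_in_V by simp

lemma dist_eq_1_iff:
  assumes "u \<in> V" "w \<in> V"
  shows "dist V E u w = 1 \<longleftrightarrow> E u w"
proof
  assume "dist V E u w = 1"
  then obtain xs where "walk V E xs" "hd xs = u" "last xs = w" "length xs = 2"
    using shortest_walk_exists[OF assms] by auto
  then show "E u w"
    by (cases xs; cases "tl xs") auto
next
  assume "E u w"
  then show "dist V E u w = 1"
    using dist_edge_le dist_eq_0_iff[OF assms] edge_irrefl by (metis le_neq_implies_less less_one)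
qed

lemma dist_eq_2_common_nbr:
  assumes "u \<in> V" "w \<in> V" "dist V E u w = 2"
  obtains c where "E u c" "E c w"
proof -
  obtain xs where "walk V E xs" "hd xs = u" "last xs = w" "length xs = 3"
    using shortest_walk_exists[OF assms(1,2)] assms(3) by auto
  then obtain c where "walk V E [u, c, w]"
    by (cases xs; cases "tl xs"; cases "tl (tl xs)") auto
  then show thesis
    using that by auto
qed

lemma dist_triangle:
  assumes "u \<in> V" "y \<in> V" "w \<in> V"
  shows "dist V E u w \<le> dist V E u y + dist V E y w"
proof -
  obtain xs where xs: "walk V E xs" "hd xs = u" "last xs = y" "length xs = Suc (dist V E u y)"
    using shortest_walk_exists[OF assms(1,2)] by blast
  obtain ys where ys: "walk V E ys" "hd ys = y" "last ys = w" "length ys = Suc (dist V E y w)"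
    using shortest_walk_exists[OF assms(2,3)] by blast
  have "walk V E (xs @ tl ys) \<and> hd (xs @ tl ys) = u \<and> last (xs @ tl ys) = w"
  proof (cases "tl ys")
    case (Cons y' zs)
    with ys have ys_eq: "ys = y # y' # zs"
      by (cases ys) auto
    with xs ys have "walk V E (xs @ y' # zs)"
      by (intro walk_append) auto
    moreover have "xs \<noteq> []"
      using xs(4) by auto
    ultimately show ?thesis
      using Cons xs ys ys_eq by simp
  qed (use xs ys in \<open>cases ys; auto simp: walk_def\<close>)
  then show ?thesis
    using dist_le_walk[of "xs @ tl ys"] xs(4) ys(4) by fastforce
qed

lemma dist_edge: "E x y \<Longrightarrow> u \<in> V \<Longrightarrow> dist V E u y \<le> Suc (dist V E u x)"
  using dist_triangle[of u x y] dist_edge_le edge_in_V by fastforce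

end

section \<open>Levels below a root in a graph of large girth\<close>

locale rooted_graph = connected_graph +
  fixes r :: 'a
  assumes root: "r \<in> V"
begin

abbreviation level :: "'a \<Rightarrow> nat" where
  "level x \<equiv> dist V E r x"

lemma level_eq_0_iff: "x \<in> V \<Longrightarrow> level x = 0 \<longleftrightarrow> x = r"
  using dist_eq_0_iff[OF root] by auto

lemma level_eq_1_iff: "x \<in> V \<Longrightarrow> level x = 1 \<longleftrightarrow> E r x"
  using dist_eq_1_iff root by blast

lemma level_edge: "E x y \<Longrightarrow> level y \<le> Suc (level x)"
  using dist_edge root by blast

lemma level_middle:
  assumes "E x z" "E z u" "level u = Suc (Suc (level x))"
  shows "level z = Suc (level x)"
  using level_edge[OF assms(1)] level_edge[OF assms(2)] assms(3) by linarith

lemma level_2_common_nbr_root: "x \<in> V \<Longrightarrow> level x = 2 \<Longrightarrow> common_nbr E r x"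
  using dist_eq_2_common_nbr[OF root] edge_sym unfolding common_nbr_def by metis

definition geodesic :: "(nat \<Rightarrow> 'a) \<Rightarrow> nat \<Rightarrow> bool" where
  "geodesic f n \<longleftrightarrow> f 0 = r \<and> (\<forall>i<n. E (f i) (f (Suc i))) \<and> (\<forall>i\<le>n. f i \<in> V \<and> level (f i) = i)"

lemma geodesic_exists:
  assumes "x \<in> V"
  obtains f where "geodesic f (level x)" "f (level x) = x"
proof -
  obtain xs where xs: "walk V E xs" "hd xs = r" "last xs = x" "length xs = Suc (level x)"
    using shortest_walk_exists[OF root assms] by blast
  define f where "f i = xs ! i" for i
  have f0: "f 0 = r" and fx: "f (level x) = x"
    using xs unfolding f_def by (simp_all add: hd_conv_nth last_conv_nth flip: length_greater_0_conv)
  have edges: "E (f i) (f (Suc i))" if "i < level x" for i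
    using xs(1,4) that unfolding walk_def f_def by auto
  have in_V: "f i \<in> V" if "i \<le> level x" for i
    using xs(1,4) that unfolding walk_def f_def by (auto simp: less_Suc_eq_le)
  have "level (f i) = i" if i: "i \<le> level x" for i
  proof -
    have "level (f i) \<le> i"
      using dist_le_path[of 0 i f] edges i f0 root by simp
    moreover have "dist V E (f i) x \<le> level x - i"
      using dist_le_path[of i "level x" f] edges i in_V fx by simp
    moreover have "level x \<le> level (f i) + dist V E (f i) x"
      using dist_triangle[OF root in_V[OF i] assms] .
    ultimately show ?thesis
      using i by linarith
  qed
  with f0 fx edges in_V show thesis
    using that unfolding geodesic_def by blast
qed

lemma geodesic_snoc:
  assumes "geodesic f n" "E (f n) x" "level x = Suc n"
  shows "geodesic (f(Suc n := x)) (Suc n)"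
  using assms edge_in_V unfolding geodesic_def by (auto simp: less_Suc_eq le_Suc_eq)

lemma geodesics_cycle:
  assumes f: "geodesic f a" and h: "geodesic h b" and edge: "E (f a) (h b)"
    and "j < a" "j < b" "f j = h j" and apart: "\<And>i. j < i \<Longrightarrow> i \<le> a \<Longrightarrow> i \<le> b \<Longrightarrow> f i \<noteq> h i"
  shows "is_cycle V E (map f [j..<Suc a] @ rev (map h [Suc j..<Suc b]))" (is "is_cycle V E ?cs")
  unfolding is_cycle_def
proof (intro conjI)
  have f_level: "level (f i) = i" if "i \<le> a" for i
    using f that unfolding geodesic_def by blast
  have h_level: "level (h i) = i" if "i \<le> b" for i
    using h that unfolding geodesic_def by blast
  show "walk V E ?cs"
  proof (rule walk_append)
    show "walk V E (map f [j..<Suc a])"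
      using f \<open>j < a\<close> unfolding geodesic_def by (intro walk_map_upt) auto
    show "walk V E (rev (map h [Suc j..<Suc b]))"
      using h \<open>j < b\<close> unfolding geodesic_def by (intro walk_rev walk_map_upt) auto
    show "E (last (map f [j..<Suc a])) (hd (rev (map h [Suc j..<Suc b])))"
      using edge \<open>j < a\<close> \<open>j < b\<close> by (simp add: hd_rev last_map)
  qed
  have "inj_on f {j..<Suc a}" "inj_on h {Suc j..<Suc b}"
    using f_level h_level by (metis atLeastLessThan_iff inj_onI less_Suc_eq_le)+
  moreover have "f i \<noteq> h i'" if "i \<in> {j..<Suc a}" "i' \<in> {Suc j..<Suc b}" for i i'
    using f_level[of i] h_level[of i'] apart[of i] that by force
  ultimately show "distinct ?cs"
    by (auto simp: distinct_map simp del: upt_Suc)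
  have "last ?cs = h (Suc j)" "hd ?cs = h j"
    using assms(4-6) by (simp_all add: last_rev upt_rec del: upt_Suc)
  then show "E (last ?cs) (hd ?cs)"
    using h \<open>j < b\<close> edge_sym unfolding geodesic_def by simp
  show "3 \<le> length ?cs"
    using assms(4,5) by simp
qed

text \<open>Two geodesics from the root whose ends are adjacent close up, after their last common
  vertex, to a cycle of length at most \<open>a + b + 1\<close>.\<close>

lemma geodesics_joined_by_edge:
  assumes girth: "girth_at_least V E g" and f: "geodesic f a" and h: "geodesic h b"
    and edge: "E (f a) (h b)" and apart: "f (min a b) \<noteq> h (min a b)" and short: "a + b + 1 < g"
  shows False
proof -
  have "f 0 = h 0"
    using f h unfolding geodesic_def by simp
  then obtain j where j: "j \<le> min a b" "f j = h j"
    and last_common: "\<And>i. i \<le> min a b \<Longrightarrow> f i = h i \<Longrightarrow> i \<le> j"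
    using Nat.ex_has_greatest_nat[where P = "\<lambda>i. i \<le> min a b \<and> f i = h i" and k = 0 and b = "min a b"]
    by auto
  have "j < min a b"
    using j apart le_neq_implies_less by blast
  then have "is_cycle V E (map f [j..<Suc a] @ rev (map h [Suc j..<Suc b]))"
    using geodesics_cycle[OF f h edge _ _ j(2)] last_common by fastforce
  moreover have "length (map f [j..<Suc a] @ rev (map h [Suc j..<Suc b])) < g"
    using \<open>j < min a b\<close> short by auto
  ultimately show False
    using girth unfolding girth_at_least_def by fastforce
qed

lemma no_edge_within_level:
  assumes "girth_at_least V E g" "E x y" "level x = k" "level y = k" "2 * k + 1 < g"
  shows False
proof -
  obtain f where f: "geodesic f k" "f k = x"
    using geodesic_exists edge_in_V assms(2,3) by metis
  obtain h where h: "geodesic h k" "h k = y"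
    using geodesic_exists edge_in_V assms(2,4) by metis
  have "x \<noteq> y"
    using edge_irrefl assms(2) by blast
  then show False
    using geodesics_joined_by_edge[OF assms(1) f(1) h(1)] f(2) h(2) assms(2,5) by auto
qed

lemma unique_parent:
  assumes "girth_at_least V E g" "E p x" "E q x" "level p = k" "level q = k" "level x = Suc k"
    and "2 * k + 2 < g"
  shows "p = q"
proof (rule ccontr)
  assume "p \<noteq> q"
  obtain f where f: "geodesic f k" "f k = p"
    using geodesic_exists edge_in_V assms(2,4) by metis
  obtain h where h: "geodesic h k" "h k = q"
    using geodesic_exists edge_in_V assms(3,5) by metis
  have "geodesic (f(Suc k := x)) (Suc k)"
    using geodesic_snoc[OF f(1)] f(2) assms(2,6) by blast
  then show False
    using geodesics_joined_by_edge[OF assms(1) _ h(1)] f(2) h(2) assms(3,7) \<open>p \<noteq> q\<close> edge_sym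
    by fastforce
qed

lemma second_nbr_level:
  assumes "girth_at_least V E g" "common_nbr E r y" "y \<noteq> r" "3 < g"
  shows "level y = 2"
proof -
  obtain w where w: "E r w" "E y w"
    using assms(2) unfolding common_nbr_def by blast
  have "level w = 1"
    using level_eq_1_iff w edge_in_V by blast
  moreover have "level y \<noteq> 0" "level y \<noteq> 1"
    using level_eq_0_iff assms(3,4) edge_in_V w(2) no_edge_within_level[OF assms(1) w(2) _ \<open>level w = 1\<close>]
    by auto
  ultimately show ?thesis
    using level_edge[OF edge_sym[OF w(2)]] by linarith
qed

lemma level_child:
  assumes girth: "girth_at_least V E g" and "E p x" "level p = k" "level x = Suc k"
    and "E x y" "y \<noteq> p" "2 * k + 3 < g"
  shows "level y = Suc (Suc k)"
proof -
  have "level y \<noteq> Suc k"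
    using no_edge_within_level[OF girth \<open>E x y\<close>] assms by force
  moreover have "level y \<noteq> k"
    using unique_parent[OF girth \<open>E p x\<close> edge_sym[OF \<open>E x y\<close>]] assms by force
  ultimately show ?thesis
    using level_edge[OF \<open>E x y\<close>] level_edge[OF edge_sym[OF \<open>E x y\<close>]] assms(4) by linarith
qed

lemma no_common_nbr_far:
  assumes "Suc (Suc (level x)) < level u"
  shows "\<not> common_nbr E u x"
proof
  assume "common_nbr E u x"
  then obtain c where "E x c" "E c u"
    unfolding common_nbr_def by (blast dest: edge_sym)
  then show False
    using level_edge[of x c] level_edge[of c u] assms by simp
qed

definition grandchild :: "nat \<Rightarrow> 'a \<Rightarrow> 'a \<Rightarrow> bool" where
  "grandchild k y u \<longleftrightarrow> level y = k \<and> level u = Suc (Suc k) \<and> common_nbr E y u"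

lemma grandchildD:
  assumes "grandchild k y u"
  shows "u \<in> V" "u \<noteq> y" "common_nbr E y u"
  using assms edge_in_V unfolding grandchild_def common_nbr_def by auto

lemma grandchild_exists:
  assumes girth: "girth_at_least V E g" and "E p x" "level p = k" "level x = Suc k"
    and "E x z" "z \<noteq> p" "\<not> leaf V E z" "2 * k + 5 < g"
  obtains u where "grandchild (Suc k) x u"
proof -
  have z: "level z = Suc (Suc k)"
    using level_child[OF girth assms(2-6)] assms(8) by simp
  obtain u where u: "E z u" "u \<noteq> x"
    using not_leaf_other_nbr edge_sym assms(5,7) by blast
  then have "level u = Suc (Suc (Suc k))"
    using level_child[OF girth \<open>E x z\<close> assms(4) z] assms(8) by simp
  then show thesis
    using that u(1) assms(4,5) edge_sym unfolding grandchild_def common_nbr_def by blast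
qed

lemma grandchild_unique_grandparent:
  assumes girth: "girth_at_least V E g" and "grandchild k y u" "grandchild k y' u" "2 * k + 4 < g"
  shows "y = y'"
proof -
  obtain z z' where "E y z" "E z u" "E y' z'" "E z' u"
    using assms(2,3) unfolding grandchild_def common_nbr_def by (blast dest: edge_sym)
  moreover have "level z = Suc k" "level z' = Suc k"
    using level_middle assms(2,3) calculation unfolding grandchild_def by simp_all
  moreover have "z = z'"
    using unique_parent[OF girth \<open>E z u\<close> \<open>E z' u\<close>] calculation assms(2,4)
    unfolding grandchild_def by simp
  ultimately show ?thesis
    using unique_parent[OF girth \<open>E y z\<close>, of y' k] assms(2-4) unfolding grandchild_def by simp
qed

lemma grandchild_no_common_nbr:
  assumes girth: "girth_at_least V E g" and "grandchild k y u" "level x = k" "x \<noteq> y" "2 * k + 4 < g"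
  shows "\<not> common_nbr E u x"
proof
  assume "common_nbr E u x"
  then have "grandchild k x u"
    using assms(2,3) common_nbr_sym[of E u x] unfolding grandchild_def by simp
  then show False
    using grandchild_unique_grandparent[OF girth _ assms(2,5)] assms(4) by simp
qed

lemma grandchildren_common_nbr:
  assumes girth: "girth_at_least V E g" and y: "grandchild k y u" and y': "grandchild k y' u'"
    and "common_nbr E u u'" "2 * k + 6 < g"
  shows "u = u' \<or> y = y'"
proof -
  obtain c where c: "E u c" "E u' c"
    using assms(4) unfolding common_nbr_def by blast
  have lu: "level u = Suc (Suc k)" "level u' = Suc (Suc k)"
    using y y' unfolding grandchild_def by simp_all
  then have "Suc k \<le> level c" "level c \<le> Suc (Suc (Suc k))"
    using level_edge[OF c(1)] level_edge[OF edge_sym[OF c(1)]] by linarith+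
  then consider "level c = Suc k" | "level c = Suc (Suc k)" | "level c = Suc (Suc (Suc k))"
    by linarith
  then show ?thesis
  proof cases
    case 1
    obtain z where z: "E y z" "E z u"
      using y unfolding grandchild_def common_nbr_def by (blast dest: edge_sym)
    have "level z = Suc k"
      using level_middle[OF z] y unfolding grandchild_def by simp
    then have "z = c"
      using unique_parent[OF girth z(2) edge_sym[OF c(1)]] 1 lu assms(5) by simp
    then have "grandchild k y u'"
      using y c(2) z(1) edge_sym lu unfolding grandchild_def common_nbr_def by blast
    then show ?thesis
      using grandchild_unique_grandparent[OF girth _ y'] assms(5) by simp
  next
    case 2
    then show ?thesis
      using no_edge_within_level[OF girth c(1)] lu assms(5) by simp
  next
    case 3
    then show ?thesis
      using unique_parent[OF girth c] lu assms(5) by simp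
  qed
qed

end

section \<open>Graphs in \<open>\<U>\<close> rooted at distance two from the supports\<close>

locale rooted_U_graph = rooted_graph +
  assumes in_U: "in_U V E" and girth: "girth_at_least V E 15"
    and supports_far: "support V E t \<Longrightarrow> 2 \<le> level t"
begin

lemma grandchild_of_second_nbr:
  assumes "common_nbr E r y" "level y = 2" "\<not> single_star_support V E y"
  obtains u where "grandchild 2 y u"
proof -
  obtain w where w: "E r w" "E y w"
    using assms(1) unfolding common_nbr_def by blast
  have "level w = 1"
    using level_eq_1_iff w edge_in_V by blast
  have w_not_support: "\<not> support V E w"
    using supports_far \<open>level w = 1\<close> by fastforce
  have "\<not> leaf V E y"
    using w_not_support w(2) edge_in_V unfolding support_def by (blast dest: edge_sym)
  have "\<exists>z. E y z \<and> z \<noteq> w \<and> \<not> leaf V E z"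
  proof (rule ccontr)
    assume "\<nexists>z. E y z \<and> z \<noteq> w \<and> \<not> leaf V E z"
    then have "single_star_support V E y"
      using support_if_other_nbrs_leaves[OF w(2) \<open>\<not> leaf V E y\<close>]
        leaf_not_support[OF _ _ \<open>\<not> leaf V E y\<close>] w_not_support
      unfolding single_star_support_def by blast
    then show False
      using assms(3) by blast
  qed
  then obtain z where z: "E y z" "z \<noteq> w" "\<not> leaf V E z"
    by blast
  show thesis
    using grandchild_exists[OF girth edge_sym[OF w(2)] \<open>level w = 1\<close> _ z] that assms(2)
    by (auto simp: numeral_eq_Suc)
qed

lemma grandchild_beyond_single_star:
  assumes ss: "single_star_support V E s" and "level s = 2"
    and "common_nbr E s x" "\<not> common_nbr E x r"
  obtains u where "grandchild 4 x u"
proof -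
  have "support V E s" and no_support_nbr: "\<And>u. E s u \<Longrightarrow> \<not> support V E u"
    using ss unfolding single_star_support_def by blast+
  have "s \<in> V"
    using ss unfolding single_star_support_def support_def by blast
  then have "x \<noteq> s"
    using assms(2,4) common_nbr_sym[OF level_2_common_nbr_root] by blast
  obtain y where xy: "E x y" "E s y"
    using assms(3) unfolding common_nbr_def by blast
  obtain w where w: "E r w" "E w s"
    using dist_eq_2_common_nbr[OF root \<open>s \<in> V\<close> assms(2)] .
  have "level w = 1"
    using level_eq_1_iff w edge_in_V by blast
  have "y \<noteq> w"
    using w xy assms(4) unfolding common_nbr_def by (blast dest: edge_sym)
  then have y: "level y = 3"
    using level_child[OF girth w(2) \<open>level w = 1\<close> _ xy(2)] assms(2) by simp
  have "\<not> leaf V E x"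
    using no_support_nbr[OF xy(2)] xy(1) edge_in_V unfolding support_def by (blast dest: edge_sym)
  have "\<exists>z. E x z \<and> z \<noteq> y \<and> \<not> leaf V E z"
  proof (rule ccontr)
    assume "\<nexists>z. E x z \<and> z \<noteq> y \<and> \<not> leaf V E z"
    then have "support V E x"
      using support_if_other_nbrs_leaves[OF xy(1) \<open>\<not> leaf V E x\<close>] by blast
    then show False
      using in_U_supports_no_common_nbr[OF in_U _ \<open>support V E s\<close> \<open>x \<noteq> s\<close>]
        common_nbr_sym[OF assms(3)] by blast
  qed
  then obtain z where z: "E x z" "z \<noteq> y" "\<not> leaf V E z"
    by blast
  have "level x = 4"
    using level_child[OF girth xy(2) assms(2) _ edge_sym[OF xy(1)] \<open>x \<noteq> s\<close>] y by simp
  then show thesis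
    using grandchild_exists[OF girth edge_sym[OF xy(1)] y _ z] that by (auto simp: numeral_eq_Suc)
qed

lemma leaf_below_support_nbr:
  assumes "support V E s" "level s = 2" "\<not> single_star_support V E s"
  obtains t m where "E s t" "E t m" "leaf V E m" "level t = 3" "level m = 4"
proof -
  obtain w where w: "E r w" "E w s"
    using dist_eq_2_common_nbr[OF root] assms(1,2) unfolding support_def by metis
  obtain t where t: "E s t" "support V E t"
    using assms unfolding single_star_support_def by blast
  have "level t = 3"
    using supports_far[OF t(2)] level_edge[OF t(1)] no_edge_within_level[OF girth t(1)] assms(2)
    by fastforce
  obtain m where m: "E t m" "leaf V E m"
    using t(2) unfolding support_def by blast
  have "w \<noteq> t"
    using level_eq_1_iff w \<open>level t = 3\<close> edge_in_V by fastforce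
  then have "m \<noteq> s"
    using leaf_nbr_unique[OF m(2)] w t edge_sym by blast
  then have "level m = 4"
    using level_child[OF girth t(1) assms(2) _ m(1)] \<open>level t = 3\<close> by simp
  then show thesis
    using that t(1) m \<open>level t = 3\<close> by blast
qed

text \<open>Otherwise \<open>s\<close> could be traded for the root and a leaf two levels below \<open>s\<close>.\<close>

lemma single_star_support_at_level_2_exists:
  assumes "support V E s" "level s = 2"
  shows "\<exists>s'. single_star_support V E s' \<and> level s' = 2"
proof (rule ccontr)
  assume none: "\<nexists>s'. single_star_support V E s' \<and> level s' = 2"
  have sV: "s \<in> V"
    using assms(1) unfolding support_def by blast
  have "common_nbr E r s"
    using level_2_common_nbr_root[OF sV assms(2)] .
  obtain t m where tm: "E s t" "E t m" "leaf V E m" "level t = 3" "level m = 4"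
    using leaf_below_support_nbr assms none by blast
  have m_nbr: "E m c \<Longrightarrow> c = t" for c
    using leaf_nbr_unique[OF tm(3)] tm(2) edge_sym by blast
  show False
  proof (rule in_U_no_witnessed_exchange[OF in_U sV root,
        where c = m and R = "\<lambda>y u. y \<noteq> s \<and> grandchild 2 y u"])
    show "m \<in> V" "r \<noteq> m" "r \<noteq> s" "m \<noteq> s"
      using tm edge_in_V dist_self[OF root] assms(2) by auto
    show "\<not> common_nbr E r m"
      using no_common_nbr_far[of r m] common_nbr_sym[of E r m] dist_self[OF root] tm(5) by auto
    show "common_nbr E s r"
      using common_nbr_sym[OF \<open>common_nbr E r s\<close>] .
    show "common_nbr E s m"
      using tm edge_sym unfolding common_nbr_def by blast
  next
    fix y
    assume y: "y \<in> V" "y \<noteq> s" "\<not> common_nbr E y s" "common_nbr E r y \<or> common_nbr E m y"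
    have "\<not> common_nbr E m y"
      using y(3) m_nbr tm(1) unfolding common_nbr_def by (blast dest: edge_sym)
    moreover have "y \<noteq> r"
      using y(3) \<open>common_nbr E r s\<close> by auto
    ultimately have "common_nbr E r y" "level y = 2"
      using y(4) second_nbr_level[OF girth] by simp_all
    moreover have "\<not> single_star_support V E y"
      using none \<open>level y = 2\<close> by blast
    ultimately obtain u where "grandchild 2 y u"
      using grandchild_of_second_nbr by blast
    then show "\<exists>u. y \<noteq> s \<and> grandchild 2 y u"
      using y(2) by blast
  next
    fix y u
    assume R: "y \<noteq> s \<and> grandchild 2 y u"
    then have "u \<noteq> s"
      using assms(2) unfolding grandchild_def by auto
    moreover have "\<not> common_nbr E u s"
      using grandchild_no_common_nbr[OF girth conjunct2[OF R] assms(2)] R by auto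
    ultimately show "u \<in> V \<and> u \<noteq> s \<and> \<not> common_nbr E u s \<and> u \<noteq> y \<and> common_nbr E y u"
      using grandchildD[of 2 y u] R by blast
  next
    fix y y' u u'
    assume "y \<noteq> s \<and> grandchild 2 y u" "y' \<noteq> s \<and> grandchild 2 y' u'" "common_nbr E u u'"
    then show "u = u' \<or> y = y'"
      using grandchildren_common_nbr[OF girth, of 2 y u y' u'] by simp
  qed
qed

text \<open>Otherwise the root could be traded for the two single star supports.\<close>

lemma single_star_support_at_level_2_unique:
  assumes s1: "single_star_support V E s1" "level s1 = 2"
    and s2: "single_star_support V E s2" "level s2 = 2"
  shows "s1 = s2"
proof (rule ccontr)
  assume "s1 \<noteq> s2"
  have supports: "support V E s1" "support V E s2" and "s1 \<in> V" "s2 \<in> V"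
    using s1 s2 unfolding single_star_support_def support_def by blast+
  show False
  proof (rule in_U_no_witnessed_exchange[OF in_U root \<open>s1 \<in> V\<close> \<open>s2 \<in> V\<close> \<open>s1 \<noteq> s2\<close>,
        where R = "grandchild 4"])
    show "\<not> common_nbr E s1 s2"
      using in_U_supports_no_common_nbr[OF in_U supports \<open>s1 \<noteq> s2\<close>] .
    show "s1 \<noteq> r" "s2 \<noteq> r"
      using s1 s2 dist_self[OF root] by auto
    show "common_nbr E r s1" "common_nbr E r s2"
      using level_2_common_nbr_root \<open>s1 \<in> V\<close> \<open>s2 \<in> V\<close> s1 s2 by blast+
  next
    fix y
    assume y: "y \<in> V" "y \<noteq> r" "\<not> common_nbr E y r" "common_nbr E s1 y \<or> common_nbr E s2 y"
    from y(4) show "\<exists>u. grandchild 4 y u"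
    proof
      assume "common_nbr E s1 y"
      then show ?thesis
        using grandchild_beyond_single_star[OF s1 _ y(3)] by metis
    next
      assume "common_nbr E s2 y"
      then show ?thesis
        using grandchild_beyond_single_star[OF s2 _ y(3)] by metis
    qed
  next
    fix y u
    assume "grandchild 4 y u"
    moreover have "\<not> common_nbr E u r" "u \<noteq> r"
      using no_common_nbr_far[of r u] dist_self[OF root] calculation unfolding grandchild_def by auto
    ultimately show "u \<in> V \<and> u \<noteq> r \<and> \<not> common_nbr E u r \<and> u \<noteq> y \<and> common_nbr E y u"
      using grandchildD by blast
  next
    fix y y' u u'
    assume "grandchild 4 y u" "grandchild 4 y' u'" "common_nbr E u u'"
    then show "u = u' \<or> y = y'"
      using grandchildren_common_nbr[OF girth, of 4 y u y' u'] by simp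
  qed
qed

end

lemma dist_set_le: "finite S \<Longrightarrow> t \<in> S \<Longrightarrow> dist_set V E v S \<le> dist V E v t"
  unfolding dist_set_def by simp

lemma dist_set_attained: "finite S \<Longrightarrow> S \<noteq> {} \<Longrightarrow> \<exists>s\<in>S. dist V E v s = dist_set V E v S"
  unfolding dist_set_def by (metis (mono_tags, lifting) Min_in finite_imageI image_iff image_is_empty)

theorem lemma6:
  fixes V :: "'a set" and E :: "'a \<Rightarrow> 'a \<Rightarrow> bool"
  assumes "graph V E" and "V \<noteq> {}" and "connected V E"
    and "min_degree V E = 1"
    and "girth_at_least V E 15"
    and "in_U V E"
    and "v \<in> V" and "dist_set V E v (support_set V E) = 2"
  shows "\<exists>!s. s \<in> V \<and> single_star_support V E s \<and> dist V E v s = 2"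
proof -
  interpret rooted_graph V E v
    using assms by unfold_locales
  obtain s0 where "support V E s0"
    using support_exists[OF assms(2,4)] .
  then have fin: "finite (support_set V E)" and "support_set V E \<noteq> {}"
    using finite_V unfolding support_set_def support_def by auto
  then obtain s where "s \<in> support_set V E" "level s = 2"
    using dist_set_attained[OF fin] assms(8) by metis
  then have s: "support V E s" "level s = 2"
    unfolding support_set_def by simp_all
  interpret rooted_U_graph V E v
  proof
    show "support V E t \<Longrightarrow> 2 \<le> level t" for t
      using dist_set_le[OF fin, where t = t and V = V and E = E and v = v] assms(8)
      unfolding support_set_def support_def by simp
  qed (use assms in blast)+
  show ?thesis
    using single_star_support_at_level_2_exists[OF s] single_star_support_at_level_2_unique
    unfolding single_star_support_def support_def by blast
qed

end
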